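(* Let $K\ge2$, $0<q<p$ with $p+(K-1)q=1$. Each of the four estimators $\mathrm{Inv}$, $\mathrm{InvP}$, $\mathrm{InvN}$, $\mathrm{MLE}^*$ is consistent: for every $\theta\in\Delta$, if $\hat\theta$ denotes any of them, $\hat\theta(\phi^{(N)})\to\theta$ in probability as $N\to\infty$. Moreover, for $\hat\theta\in\{\mathrm{Inv},\mathrm{InvP}\}$, the mean squared error satisfies $\mathbb{E}\|\hat\theta(\phi^{(N)})-\theta\|_2^2=O(K/N)$, i.e. there is a constant $C$ depending only on $p,q$ such that $\mathbb{E}\|\hat\theta(\phi^{(N)})-\theta\|_2^2\le CK/N$ for all $\theta\in\Delta$ and $N\ge1$.
   Context: $\Delta=\{\theta\in\mathbb{R}^K:\theta_i\ge0,\sum_i\theta_i=1\}$. Randomized response: on input $x\in\{1,\dots,K\}$, outputs $y$ with probability $p$ if $y=x$, $q$ otherwise. For $\theta\in\Delta$, let $X_1,X_2,\dots$ be i.i.d. with distribution $\theta$, $Y_u$ the output of randomized response on $X_u$ (independent randomness), and $\phi^{(N)}$ the empirical histogram of $Y_1,\dots,Y_N$: $\phi^{(N)}_y=\frac1N|\{u\le N:Y_u=y\}|$. Estimators: $\mathrm{Inv}(\phi)_i=\frac{\phi_i-q}{p-q}$; $\mathrm{InvN}(\phi)_i=\frac{\max(0,\mathrm{Inv}(\phi)_i)}{\sum_j\max(0,\mathrm{Inv}(\phi)_j)}$; $\mathrm{InvP}(\phi)=\arg\min_{\theta'\in\Delta}\|\theta'-\mathrm{Inv}(\phi)\|_2$.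 $\mathrm{MLE}^*(\phi)$: for real $\tau$ let $m(\tau)=|\{i:\phi_i<\tau\}|$, $c_\tau=\frac{1-m(\tau)q}{\sum_{i:\phi_i\ge\tau}\phi_i}$; let $\tau^*$ be the smallest $\tau\in\{\phi_1,\dots,\phi_K\}$ with $c_\tau\phi_i\ge q$ for all $i$ with $\phi_i\ge\tau$; $\mathrm{MLE}^*(\phi)_i=0$ if $\phi_i<\tau^*$ and $\frac{c_{\tau^*}\phi_i-q}{p-q}$ otherwise. *)

theory Defs
  imports "HOL-Probability.Probability"
begin

(* Indices are 0..K-1 (instead of 1..K); vectors in R^K are functions nat => real,
   only the coordinates i < K are meaningful. *)

definition prob_simplex :: "nat \<Rightarrow> (nat \<Rightarrow> real) set" where
  "prob_simplex K = {\<theta>. (\<forall>i<K. 0 \<le> \<theta> i) \<and> (\<Sum>i<K. \<theta> i) = 1}"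

definition cat_pmf :: "nat \<Rightarrow> (nat \<Rightarrow> real) \<Rightarrow> nat pmf" where
  "cat_pmf K \<theta> = embed_pmf (\<lambda>i. if i < K then \<theta> i else 0)"

definition rr_pmf :: "nat \<Rightarrow> real \<Rightarrow> real \<Rightarrow> nat \<Rightarrow> nat pmf" where
  "rr_pmf K p q x = embed_pmf (\<lambda>y. if y < K then (if y = x then p else q) else 0)"

definition out_pmf :: "nat \<Rightarrow> real \<Rightarrow> real \<Rightarrow> (nat \<Rightarrow> real) \<Rightarrow> nat pmf" where
  "out_pmf K p q \<theta> = bind_pmf (cat_pmf K \<theta>) (rr_pmf K p q)"

fun iid_pmf :: "nat \<Rightarrow> 'a pmf \<Rightarrow> 'a list pmf" where
  "iid_pmf 0 D = return_pmf []"
| "iid_pmf (Suc n) D = bind_pmf D (\<lambda>x. bind_pmf (iid_pmf n D) (\<lambda>xs. return_pmf (x # xs)))"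

definition hist :: "nat list \<Rightarrow> nat \<Rightarrow> real" where
  "hist ys y = real (length (filter (\<lambda>z. z = y) ys)) / real (length ys)"

definition phi_pmf :: "nat \<Rightarrow> real \<Rightarrow> real \<Rightarrow> (nat \<Rightarrow> real) \<Rightarrow> nat \<Rightarrow> (nat \<Rightarrow> real) pmf" where
  "phi_pmf K p q \<theta> N = map_pmf hist (iid_pmf N (out_pmf K p q \<theta>))"

definition sqdist :: "nat \<Rightarrow> (nat \<Rightarrow> real) \<Rightarrow> (nat \<Rightarrow> real) \<Rightarrow> real" where
  "sqdist K a b = (\<Sum>i<K. (a i - b i)^2)"

definition Inv :: "nat \<Rightarrow> real \<Rightarrow> real \<Rightarrow> (nat \<Rightarrow> real) \<Rightarrow> nat \<Rightarrow> real" where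
  "Inv K p q \<phi> = (\<lambda>i. (\<phi> i - q) / (p - q))"

definition InvN :: "nat \<Rightarrow> real \<Rightarrow> real \<Rightarrow> (nat \<Rightarrow> real) \<Rightarrow> nat \<Rightarrow> real" where
  "InvN K p q \<phi> = (\<lambda>i. max 0 (Inv K p q \<phi> i) / (\<Sum>j<K. max 0 (Inv K p q \<phi> j)))"

definition InvP :: "nat \<Rightarrow> real \<Rightarrow> real \<Rightarrow> (nat \<Rightarrow> real) \<Rightarrow> nat \<Rightarrow> real" where
  "InvP K p q \<phi> = (SOME t. t \<in> prob_simplex K \<and>
      (\<forall>t' \<in> prob_simplex K. sqdist K t (Inv K p q \<phi>) \<le> sqdist K t' (Inv K p q \<phi>)))"

definition mcount :: "nat \<Rightarrow> (nat \<Rightarrow> real) \<Rightarrow> real \<Rightarrow> nat" where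
  "mcount K \<phi> \<tau> = card {i. i < K \<and> \<phi> i < \<tau>}"

definition cfac :: "nat \<Rightarrow> real \<Rightarrow> (nat \<Rightarrow> real) \<Rightarrow> real \<Rightarrow> real" where
  "cfac K q \<phi> \<tau> = (1 - real (mcount K \<phi> \<tau>) * q) / (\<Sum>i\<in>{i. i < K \<and> \<phi> i \<ge> \<tau>}. \<phi> i)"

definition tau_star :: "nat \<Rightarrow> real \<Rightarrow> (nat \<Rightarrow> real) \<Rightarrow> real" where
  "tau_star K q \<phi> = Min {\<tau> \<in> \<phi> ` {..<K}. \<forall>i<K. \<phi> i \<ge> \<tau> \<longrightarrow> cfac K q \<phi> \<tau> * \<phi> i \<ge> q}"

definition MLEstar :: "nat \<Rightarrow> real \<Rightarrow> real \<Rightarrow> (nat \<Rightarrow> real) \<Rightarrow> nat \<Rightarrow> real" where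
  "MLEstar K p q \<phi> = (\<lambda>i. if \<phi> i < tau_star K q \<phi> then 0
      else (cfac K q \<phi> (tau_star K q \<phi>) * \<phi> i - q) / (p - q))"

end

theory Submission
  imports Defs
begin

text \<open>Each output \<open>Y\<^sub>u\<close> equals \<open>y\<close> with probability \<open>\<mu>\<^sub>y = q + (p - q) \<theta>\<^sub>y\<close>, so the
  histogram \<open>\<phi>\<close> of \<open>N\<close> outputs is an average of \<open>N\<close> i.i.d. indicator vectors with mean \<open>\<mu>\<close>
  and \<open>E |\<phi> - \<mu>|\<^sup>2 = (\<Sum>\<^sub>y \<mu>\<^sub>y (1 - \<mu>\<^sub>y)) / N \<le> K / (4 N)\<close>. As \<open>Inv\<close> is affine with
  \<open>Inv \<mu> = \<theta>\<close>, this bounds the mean squared error of \<open>Inv\<close> by \<open>K / (4 (p - q)\<^sup>2 N)\<close>; and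
  \<open>InvP \<phi>\<close>, being a Euclidean projection of \<open>Inv \<phi>\<close> onto the simplex, which contains \<open>\<theta>\<close>, is
  at most twice as far from \<open>\<theta>\<close> as \<open>Inv \<phi>\<close>. By Markov's inequality \<open>\<phi>\<close> concentrates at
  \<open>\<mu>\<close>, so an estimator is consistent as soon as it maps points of the simplex near \<open>\<mu>\<close> to
  points near \<open>\<theta>\<close>; for \<open>InvN\<close> and \<open>MLE\<^sup>*\<close> this is a perturbation estimate showing that
  their normalising factors tend to \<open>1\<close>.\<close>

section \<open>Distribution of the empirical histogram\<close>

lemma pmf_embed_pmf_finite_support:
  assumes "finite A" "\<And>x. 0 \<le> f x" "\<And>x. x \<notin> A \<Longrightarrow> f x = 0" "(\<Sum>x\<in>A. f x) = 1"
  shows "pmf (embed_pmf f) x = f x"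
proof (rule pmf_embed_pmf)
  have "(\<integral>\<^sup>+x. ennreal (f x) \<partial>count_space UNIV) = (\<Sum>x\<in>A. ennreal (f x))"
    using assms(1,3) by (intro nn_integral_count_space') auto
  also have "\<dots> = 1"
    using assms(2,4) by (simp add: sum_ennreal)
  finally show "(\<integral>\<^sup>+x. ennreal (f x) \<partial>count_space UNIV) = 1" .
qed (use assms(2) in auto)

lemma pmf_cat_pmf:
  assumes "\<theta> \<in> prob_simplex K"
  shows "pmf (cat_pmf K \<theta>) x = (if x < K then \<theta> x else 0)"
  unfolding cat_pmf_def
  using assms by (intro pmf_embed_pmf_finite_support[of "{..<K}"]) (auto simp: prob_simplex_def)

lemma sum_lessThan_if_eq:
  fixes p q :: real
  assumes "x < K"
  shows "(\<Sum>y<K. if y = x then p else q) = p + (real K - 1) * q"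
proof -
  have "(\<Sum>y<K. if y = x then p else q) = p + (\<Sum>y\<in>{..<K} - {x}. q)"
    using assms by (simp add: sum.remove[of _ x])
  then show ?thesis
    using assms by (simp add: of_nat_diff)
qed

lemma pmf_rr_pmf:
  assumes "x < K" "0 \<le> q" "q \<le> p" "p + (real K - 1) * q = 1"
  shows "pmf (rr_pmf K p q x) y = (if y < K then if y = x then p else q else 0)"
  unfolding rr_pmf_def
  using assms sum_lessThan_if_eq[OF assms(1), of p q]
  by (intro pmf_embed_pmf_finite_support[of "{..<K}"]) auto

lemma pmf_out_pmf:
  assumes "\<theta> \<in> prob_simplex K" "0 \<le> q" "q \<le> p" "p + (real K - 1) * q = 1"
  shows "pmf (out_pmf K p q \<theta>) y = (if y < K then q + (p - q) * \<theta> y else 0)"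
proof -
  have "pmf (out_pmf K p q \<theta>) y = (\<Sum>x<K. \<theta> x * pmf (rr_pmf K p q x) y)"
    unfolding out_pmf_def pmf_bind
    using assms(1) by (subst integral_measure_pmf[of "{..<K}"]) (auto simp: pmf_cat_pmf set_pmf_eq split: if_splits)
  also have "\<dots> = (\<Sum>x<K. if y < K then q * \<theta> x + (if x = y then (p - q) * \<theta> x else 0) else 0)"
    using assms by (intro sum.cong) (auto simp: pmf_rr_pmf algebra_simps)
  also have "\<dots> = (if y < K then q + (p - q) * \<theta> y else 0)"
    using assms(1) by (simp add: sum.distrib flip: sum_distrib_left add: prob_simplex_def)
  finally show ?thesis .
qed

lemma set_pmf_iid_pmf: "set_pmf (iid_pmf n D) \<subseteq> {xs. length xs = n \<and> set xs \<subseteq> set_pmf D}"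
  by (induction n) (simp, fastforce)

lemma finite_set_pmf_iid_pmf:
  assumes "finite (set_pmf D)"
  shows "finite (set_pmf (iid_pmf n D))"
  using finite_lists_length_eq[OF assms, of n] set_pmf_iid_pmf[of n D]
  by (auto simp: conj_commute intro: finite_subset)

lemma expectation_iid_pmf_Suc:
  fixes g :: "'a list \<Rightarrow> real"
  assumes "finite (set_pmf D)"
  shows "measure_pmf.expectation (iid_pmf (Suc n) D) g =
         measure_pmf.expectation D (\<lambda>x. measure_pmf.expectation (iid_pmf n D) (\<lambda>xs. g (x # xs)))"
proof -
  have "iid_pmf (Suc n) D = D \<bind> (\<lambda>x. map_pmf ((#) x) (iid_pmf n D))"
    by (simp add: map_pmf_def)
  then show ?thesis
    using assms finite_set_pmf_iid_pmf[OF assms]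
    by (simp add: pmf_expectation_bind[of "set_pmf D"] integral_measure_pmf[of "set_pmf D"])
qed

lemma count_list_variance_iid_pmf:
  fixes D :: "'a pmf" and y :: 'a and m :: real
  assumes fin: "finite (set_pmf D)"
  defines "m \<equiv> pmf D y"
  shows "measure_pmf.expectation (iid_pmf n D) (\<lambda>xs. (real (count_list xs y) - real n * m)\<^sup>2) = real n * m * (1 - m)"
proof -
  have int: "integrable (measure_pmf D) f" for f :: "'a \<Rightarrow> real"
    using fin by (rule integrable_measure_pmf_finite)
  define b where "b x = (if x = y then 1 else 0) - m" for x
  have E_b: "measure_pmf.expectation D b = 0"
    and E_b_sq: "measure_pmf.expectation D (\<lambda>x. (b x)\<^sup>2) = m * (1 - m)"
  proof -
    have E_ind: "measure_pmf.expectation D (\<lambda>x. if x = y then 1 else 0 :: real) = m"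
      unfolding m_def by (subst integral_measure_pmf[of "{y}"]) (auto split: if_splits)
    have "(\<lambda>x. (b x)\<^sup>2) = (\<lambda>x. (1 - 2 * m) * (if x = y then 1 else 0) + m\<^sup>2)"
      by (auto simp: b_def fun_eq_iff power2_eq_square algebra_simps)
    then show "measure_pmf.expectation D (\<lambda>x. (b x)\<^sup>2) = m * (1 - m)"
      using int by (simp add: E_ind power2_eq_square algebra_simps)
    show "measure_pmf.expectation D b = 0"
      unfolding b_def using int by (simp add: E_ind)
  qed
  have "measure_pmf.expectation (iid_pmf n D) (\<lambda>xs. real (count_list xs y) - real n * m) = 0 \<and>
        measure_pmf.expectation (iid_pmf n D) (\<lambda>xs. (real (count_list xs y) - real n * m)\<^sup>2) = real n * m * (1 - m)"
  proof (induction n)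
    case 0
    then show ?case by simp
  next
    case (Suc n)
    let ?S = "\<lambda>xs. real (count_list xs y) - real n * m"
    have int_n: "integrable (measure_pmf (iid_pmf n D)) f" for f :: "'a list \<Rightarrow> real"
      using finite_set_pmf_iid_pmf[OF fin] by (rule integrable_measure_pmf_finite)
    have step: "real (count_list (x # xs) y) - real (Suc n) * m = ?S xs + b x" for x xs
      by (simp add: b_def algebra_simps)
    have mean: "measure_pmf.expectation (iid_pmf n D) (\<lambda>xs. ?S xs + c) = c" for c
      using Suc.IH int_n by simp
    have var: "measure_pmf.expectation (iid_pmf n D) (\<lambda>xs. (?S xs + c)\<^sup>2) = real n * m * (1 - m) + c\<^sup>2" for c
    proof -
      have "(\<lambda>xs. (?S xs + c)\<^sup>2) = (\<lambda>xs. (?S xs)\<^sup>2 + 2 * c * ?S xs + c\<^sup>2)"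
        by (simp add: fun_eq_iff power2_eq_square algebra_simps)
      then show ?thesis
        using Suc.IH int_n by simp
    qed
    show ?case
      unfolding expectation_iid_pmf_Suc[OF fin] step mean var
      using E_b E_b_sq int by (simp add: algebra_simps)
  qed
  then show ?thesis ..
qed

lemma hist_eq_count_list: "hist xs y = count_list xs y / length xs"
proof -
  have "length (filter (\<lambda>z. z = y) xs) = count_list xs y"
    by (induction xs) auto
  then show ?thesis by (simp add: hist_def)
qed

section \<open>Squared distance and the probability simplex\<close>

lemma sqdist_commute: "sqdist K a b = sqdist K b a"
  unfolding sqdist_def by (simp add: power2_commute)

lemma sqdist_triangle: "sqdist K a c \<le> 2 * sqdist K a b + 2 * sqdist K b c"
proof -
  have "(a i - c i)\<^sup>2 \<le> 2 * (a i - b i)\<^sup>2 + 2 * (b i - c i)\<^sup>2" for i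
    using zero_le_power2[of "(a i - b i) - (b i - c i)"]
    by (simp add: power2_eq_square algebra_simps)
  then have "sqdist K a c \<le> (\<Sum>i<K. 2 * (a i - b i)\<^sup>2 + 2 * (b i - c i)\<^sup>2)"
    unfolding sqdist_def by (intro sum_mono)
  also have "\<dots> = 2 * sqdist K a b + 2 * sqdist K b c"
    unfolding sqdist_def by (simp add: sum.distrib sum_distrib_left)
  finally show ?thesis .
qed

lemma sqdist_le_of_coordinatewise:
  assumes "\<And>i. i < K \<Longrightarrow> \<bar>a i - b i\<bar> \<le> \<eta>"
  shows "sqdist K a b \<le> real K * \<eta>\<^sup>2"
proof -
  have "sqdist K a b \<le> (\<Sum>i<K. \<eta>\<^sup>2)"
    unfolding sqdist_def using assms
    by (intro sum_mono) (metis abs_ge_zero lessThan_iff power2_abs power_mono)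
  then show ?thesis by simp
qed

lemma coordinate_sq_le_sqdist:
  assumes "i < K"
  shows "(a i - b i)\<^sup>2 \<le> sqdist K a b"
  unfolding sqdist_def using assms by (intro member_le_sum) auto

lemma prob_simplex_coord_bounds:
  assumes "\<theta> \<in> prob_simplex K" "i < K"
  shows "0 \<le> \<theta> i" "\<theta> i \<le> 1"
proof -
  show "0 \<le> \<theta> i" using assms by (simp add: prob_simplex_def)
  have "\<theta> i \<le> (\<Sum>j<K. \<theta> j)"
    using assms by (intro member_le_sum) (auto simp: prob_simplex_def)
  then show "\<theta> i \<le> 1" using assms(1) by (simp add: prob_simplex_def)
qed

lemma simplex_threshold_exists:
  fixes v :: "nat \<Rightarrow> real"
  assumes "0 < K"
  shows "\<exists>l. (\<Sum>i<K. max (v i - l) 0) = 1"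
proof -
  define g where "g l = (\<Sum>i<K. max (v i - l) 0)" for l
  define R where "R = (\<Sum>i<K. \<bar>v i\<bar>)"
  have v_le: "\<bar>v i\<bar> \<le> R" if "i < K" for i
    unfolding R_def using that by (intro member_le_sum) auto
  have "g R = 0"
    unfolding g_def using v_le by (intro sum.neutral) force
  moreover have "(\<Sum>i<K. 1) \<le> g (- R - 1)"
    unfolding g_def using v_le by (intro sum_mono) force
  moreover have "continuous_on {- R - 1..R} g"
    unfolding g_def by (intro continuous_intros)
  moreover have "0 \<le> R"
    unfolding R_def by (intro sum_nonneg) auto
  ultimately obtain l where "g l = 1"
    using IVT2'[of g R 1 "- R - 1"] assms by force
  then show ?thesis unfolding g_def by blast
qed

lemma simplex_threshold_minimizes:
  fixes v :: "nat \<Rightarrow> real" and l :: real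
  defines "t \<equiv> \<lambda>i. max (v i - l) 0"
  assumes t_sum: "(\<Sum>i<K. t i) = 1" and t': "t' \<in> prob_simplex K"
  shows "sqdist K t v \<le> sqdist K t' v"
proof -
  \<comment> \<open>first-order optimality: \<open>t - v\<close> equals the constant \<open>-l\<close> wherever \<open>t > 0\<close>\<close>
  have "-2 * l * (t' i - t i) \<le> (t' i - v i)\<^sup>2 - (t i - v i)\<^sup>2" if "i < K" for i
  proof -
    have "- l * (t' i - t i) \<le> (t i - v i) * (t' i - t i)"
      using t' that by (cases "v i - l \<ge> 0") (auto simp: t_def prob_simplex_def mult_right_mono)
    then show ?thesis
      using zero_le_power2[of "t' i - t i"] by (simp add: power2_eq_square algebra_simps)
  qed
  then have "(\<Sum>i<K. -2 * l * (t' i - t i)) \<le> (\<Sum>i<K. (t' i - v i)\<^sup>2 - (t i - v i)\<^sup>2)"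
    by (intro sum_mono) auto
  moreover have "(\<Sum>i<K. -2 * l * (t' i - t i)) = 0"
    using t' t_sum by (simp add: sum_distrib_left[symmetric] sum_subtractf sum_negf prob_simplex_def)
  ultimately show ?thesis
    unfolding sqdist_def by (simp add: sum_subtractf)
qed

lemma InvP_minimizes:
  assumes "0 < K" "t \<in> prob_simplex K"
  shows "sqdist K (InvP K p q \<phi>) (Inv K p q \<phi>) \<le> sqdist K t (Inv K p q \<phi>)"
proof -
  let ?v = "Inv K p q \<phi>"
  obtain l where l: "(\<Sum>i<K. max (?v i - l) 0) = 1"
    using simplex_threshold_exists[OF assms(1)] by blast
  then have "(\<lambda>i. max (?v i - l) 0) \<in> prob_simplex K"
    by (simp add: prob_simplex_def)
  with simplex_threshold_minimizes[OF l]
  have "\<exists>t. t \<in> prob_simplex K \<and> (\<forall>t' \<in> prob_simplex K. sqdist K t ?v \<le> sqdist K t' ?v)"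
    by blast
  from someI_ex[OF this] show ?thesis
    unfolding InvP_def using assms(2) by blast
qed

lemma sqdist_InvP_le:
  assumes "0 < K" "\<theta> \<in> prob_simplex K"
  shows "sqdist K (InvP K p q \<phi>) \<theta> \<le> 4 * sqdist K (Inv K p q \<phi>) \<theta>"
  using InvP_minimizes[OF assms, of p q \<phi>] sqdist_triangle[of K "InvP K p q \<phi>" \<theta> "Inv K p q \<phi>"]
    sqdist_commute[of K \<theta> "Inv K p q \<phi>"]
  by linarith

section \<open>Perturbation bounds for the estimators\<close>

lemma normalized_close:
  fixes a \<theta> :: "nat \<Rightarrow> real"
  assumes \<theta>: "\<theta> \<in> prob_simplex K" and close: "\<And>j. j < K \<Longrightarrow> \<bar>a j - \<theta> j\<bar> \<le> d"
    and small: "real K * d \<le> 1 / 2" and i: "i < K"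
  shows "\<bar>a i / (\<Sum>j<K. a j) - \<theta> i\<bar> \<le> 2 * (real K + 1) * d"
proof -
  define S where "S = (\<Sum>j<K. a j)"
  have "\<bar>S - 1\<bar> = \<bar>\<Sum>j<K. a j - \<theta> j\<bar>"
    using \<theta> by (simp add: S_def sum_subtractf prob_simplex_def)
  also have "\<dots> \<le> (\<Sum>j<K. d)"
    using close by (intro order.trans[OF sum_abs] sum_mono) auto
  finally have S_close: "\<bar>S - 1\<bar> \<le> real K * d" by simp
  then have S_ge: "1 / 2 \<le> S" using small by linarith
  have "\<bar>\<theta> i * (1 - S)\<bar> \<le> 1 * (real K * d)"
    unfolding abs_mult using S_close prob_simplex_coord_bounds[OF \<theta> i]
    by (intro mult_mono) (auto simp: abs_minus_commute)
  then have num: "\<bar>(a i - \<theta> i) + \<theta> i * (1 - S)\<bar> \<le> d + real K * d"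
    using close[OF i] by linarith
  have "\<bar>a i / S - \<theta> i\<bar> = \<bar>(a i - \<theta> i) + \<theta> i * (1 - S)\<bar> / S"
    using S_ge by (simp add: field_simps)
  also have "\<dots> \<le> (d + real K * d) / (1 / 2)"
    using num S_ge by (intro frac_le) auto
  finally have "\<bar>a i / S - \<theta> i\<bar> \<le> (d + real K * d) / (1 / 2)" .
  then show ?thesis by (simp add: S_def algebra_simps)
qed

lemma abs_cfac_minus_one_le:
  fixes \<phi> :: "nat \<Rightarrow> real"
  assumes sum: "(\<Sum>i<K. \<phi> i) = 1"
    and below: "\<And>j. j < K \<Longrightarrow> \<phi> j < \<tau> \<Longrightarrow> \<bar>\<phi> j - q\<bar> \<le> \<delta>"
    and count: "real (mcount K \<phi> \<tau>) \<le> real K - 1"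
    and "0 \<le> q" "0 \<le> \<delta>" "0 < p" "real K * \<delta> \<le> p / 2" and pq: "p + (real K - 1) * q = 1"
  shows "\<bar>cfac K q \<phi> \<tau> - 1\<bar> \<le> 2 * real K * \<delta> / p"
proof -
  define E where "E = {j. j < K \<and> \<phi> j < \<tau>}"
  define s where "s = (\<Sum>j\<in>E. \<phi> j)"
  have E_sub: "E \<subseteq> {..<K}" and card_E: "real (card E) \<le> real K - 1"
    using count by (auto simp: E_def mcount_def)
  have "\<bar>s - card E * q\<bar> = \<bar>\<Sum>j\<in>E. \<phi> j - q\<bar>"
    by (simp add: s_def sum_subtractf)
  also have "\<dots> \<le> (\<Sum>j\<in>E. \<bar>\<phi> j - q\<bar>)"
    by (rule sum_abs)
  also have "\<dots> \<le> (\<Sum>j\<in>E. \<delta>)"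
    using below by (intro sum_mono) (auto simp: E_def)
  also have "\<dots> \<le> real K * \<delta>"
    using card_E \<open>0 \<le> \<delta>\<close> by (simp add: mult_right_mono)
  finally have dev: "\<bar>s - card E * q\<bar> \<le> real K * \<delta>" .
  have "card E * q \<le> (real K - 1) * q"
    using card_E \<open>0 \<le> q\<close> by (rule mult_right_mono)
  then have den_ge: "p / 2 \<le> 1 - s"
    using pq dev \<open>real K * \<delta> \<le> p / 2\<close> by linarith
  then have den_pos: "0 < 1 - s"
    using \<open>0 < p\<close> by linarith
  have "{j. j < K \<and> \<tau> \<le> \<phi> j} = {..<K} - E"
    by (auto simp: E_def)
  then have "(\<Sum>j\<in>{j. j < K \<and> \<tau> \<le> \<phi> j}. \<phi> j) = 1 - s"
    using sum E_sub by (simp add: s_def sum_diff)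
  then have "cfac K q \<phi> \<tau> = (1 - card E * q) / (1 - s)"
    by (simp add: cfac_def mcount_def E_def)
  then have "cfac K q \<phi> \<tau> - 1 = (s - card E * q) / (1 - s)"
    using den_pos by (simp add: field_simps)
  then have "\<bar>cfac K q \<phi> \<tau> - 1\<bar> = \<bar>s - card E * q\<bar> / (1 - s)"
    using den_pos by simp
  also have "\<dots> \<le> (real K * \<delta>) / (p / 2)"
    using dev den_ge \<open>0 < p\<close> by (intro frac_le) auto
  finally show ?thesis by (simp add: mult_ac)
qed

lemma tau_star_le:
  assumes "\<tau> \<in> \<phi> ` {..<K}" "\<And>i. i < K \<Longrightarrow> \<tau> \<le> \<phi> i \<Longrightarrow> q \<le> cfac K q \<phi> \<tau> * \<phi> i"
  shows "tau_star K q \<phi> \<le> \<tau>"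
  unfolding tau_star_def using assms by (intro Min_le) auto

section \<open>Consistency and mean squared error\<close>

lemma eventually_mult_less_at_right_0:
  fixes a c :: real
  assumes "0 < c"
  shows "\<forall>\<^sub>F \<delta> in at_right 0. a * \<delta> < c"
proof -
  have "((\<lambda>\<delta>. a * \<delta>) \<longlongrightarrow> 0) (at_right 0)"
    by (intro tendsto_eq_intros) auto
  then show ?thesis using assms by (rule order_tendstoD)
qed

locale randomized_response =
  fixes K :: nat and p q :: real and \<theta> :: "nat \<Rightarrow> real"
  assumes K_pos: "0 < K" and q_nonneg: "0 \<le> q" and q_less_p: "q < p"
    and p_q_sum: "p + (real K - 1) * q = 1" and \<theta>: "\<theta> \<in> prob_simplex K"
begin

definition out_prob :: "nat \<Rightarrow> real" where
  "out_prob i = q + (p - q) * \<theta> i"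

lemma p_le_one: "p \<le> 1"
proof -
  have "0 \<le> (real K - 1) * q"
    using K_pos q_nonneg by simp
  then show ?thesis using p_q_sum by linarith
qed

lemma pmf_out_pmf_eq: "pmf (out_pmf K p q \<theta>) y = (if y < K then out_prob y else 0)"
  using pmf_out_pmf[OF \<theta> q_nonneg _ p_q_sum] q_less_p by (simp add: out_prob_def)

lemma set_pmf_out_pmf: "set_pmf (out_pmf K p q \<theta>) \<subseteq> {..<K}"
  by (auto simp: set_pmf_eq pmf_out_pmf_eq split: if_splits)

lemma finite_set_pmf_out_pmf: "finite (set_pmf (out_pmf K p q \<theta>))"
  using set_pmf_out_pmf by (rule finite_subset) simp

lemma integrable_phi_pmf: "integrable (measure_pmf (phi_pmf K p q \<theta> N)) (f :: _ \<Rightarrow> real)"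
  unfolding phi_pmf_def
  by (intro integrable_measure_pmf_finite) (simp add: finite_set_pmf_iid_pmf[OF finite_set_pmf_out_pmf])

lemma set_pmf_phi_pmf:
  assumes "1 \<le> N"
  shows "set_pmf (phi_pmf K p q \<theta> N) \<subseteq> prob_simplex K"
proof
  fix \<phi> assume "\<phi> \<in> set_pmf (phi_pmf K p q \<theta> N)"
  then obtain xs where xs: "xs \<in> set_pmf (iid_pmf N (out_pmf K p q \<theta>))" "\<phi> = hist xs"
    unfolding phi_pmf_def by auto
  then have "length xs = N" "set xs \<subseteq> {..<K}"
    using set_pmf_iid_pmf set_pmf_out_pmf by blast+
  then have "(\<Sum>i<K. real (count_list xs i)) = N"
    using sum_count_set[of xs "{..<K}"] by (simp flip: of_nat_sum)
  then have "(\<Sum>i<K. \<phi> i) = 1"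
    using assms \<open>length xs = N\<close> by (simp add: xs(2) hist_eq_count_list flip: sum_divide_distrib)
  then show "\<phi> \<in> prob_simplex K"
    by (simp add: prob_simplex_def xs(2) hist_def)
qed

lemma expectation_phi_coordinate_sq:
  assumes "1 \<le> N" "i < K"
  shows "measure_pmf.expectation (phi_pmf K p q \<theta> N) (\<lambda>\<phi>. (\<phi> i - out_prob i)\<^sup>2)
    = out_prob i * (1 - out_prob i) / N"
proof -
  let ?D = "out_pmf K p q \<theta>"
  have "measure_pmf.expectation (phi_pmf K p q \<theta> N) (\<lambda>\<phi>. (\<phi> i - out_prob i)\<^sup>2)
      = measure_pmf.expectation (iid_pmf N ?D) (\<lambda>xs. (count_list xs i - N * out_prob i)\<^sup>2 / N\<^sup>2)"
    unfolding phi_pmf_def integral_map_pmf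
  proof (intro integral_cong_AE AE_pmfI)
    fix xs assume "xs \<in> set_pmf (iid_pmf N ?D)"
    then have "length xs = N" using set_pmf_iid_pmf by blast
    then show "(hist xs i - out_prob i)\<^sup>2 = (count_list xs i - N * out_prob i)\<^sup>2 / N\<^sup>2"
      using assms(1) by (simp add: hist_eq_count_list field_simps)
  qed simp_all
  also have "\<dots> = N * out_prob i * (1 - out_prob i) / N\<^sup>2"
    using count_list_variance_iid_pmf[OF finite_set_pmf_out_pmf, of N i] assms(2)
    by (simp add: pmf_out_pmf_eq)
  also have "\<dots> = out_prob i * (1 - out_prob i) / N"
    by (simp add: power2_eq_square)
  finally show ?thesis .
qed

lemma expectation_sqdist_phi:
  assumes "1 \<le> N"
  shows "measure_pmf.expectation (phi_pmf K p q \<theta> N) (\<lambda>\<phi>. sqdist K \<phi> out_prob) \<le> real K / (4 * real N)"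
proof -
  have "measure_pmf.expectation (phi_pmf K p q \<theta> N) (\<lambda>\<phi>. sqdist K \<phi> out_prob)
      = (\<Sum>i<K. out_prob i * (1 - out_prob i) / N)"
    unfolding sqdist_def using assms
    by (simp add: Bochner_Integration.integral_sum integrable_phi_pmf expectation_phi_coordinate_sq)
  also have "\<dots> \<le> (\<Sum>i<K. 1 / (4 * N))"
  proof (intro sum_mono)
    fix i
    have "out_prob i * (1 - out_prob i) \<le> 1 / 4"
      using zero_le_power2[of "out_prob i - 1 / 2"] by (simp add: power2_eq_square algebra_simps)
    then have "out_prob i * (1 - out_prob i) / N \<le> (1 / 4) / N"
      by (rule divide_right_mono) simp
    then show "out_prob i * (1 - out_prob i) / N \<le> 1 / (4 * N)"
      by simp
  qed
  finally show ?thesis by simp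
qed

lemma prob_sqdist_phi_ge:
  assumes "1 \<le> N" "0 < c"
  shows "measure_pmf.prob (phi_pmf K p q \<theta> N) {\<phi>. c \<le> sqdist K \<phi> out_prob} \<le> real K / (4 * real N * c)"
proof -
  have "measure_pmf.prob (phi_pmf K p q \<theta> N) {\<phi>. c \<le> sqdist K \<phi> out_prob}
      \<le> measure_pmf.expectation (phi_pmf K p q \<theta> N) (\<lambda>\<phi>. sqdist K \<phi> out_prob) / c"
    using integral_Markov_inequality_measure[OF integrable_phi_pmf _ _ assms(2), of UNIV]
    by (simp add: sqdist_def sum_nonneg)
  also have "\<dots> \<le> real K / (4 * real N) / c"
    using expectation_sqdist_phi[OF assms(1)] assms(2) by (intro divide_right_mono) auto
  finally show ?thesis by simp
qed

lemma Inv_minus: "Inv K p q \<phi> i - \<theta> i = (\<phi> i - out_prob i) / (p - q)"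
  using q_less_p by (simp add: Inv_def out_prob_def field_simps)

lemma sqdist_Inv: "sqdist K (Inv K p q \<phi>) \<theta> = sqdist K \<phi> out_prob / (p - q)\<^sup>2"
  unfolding sqdist_def by (simp add: Inv_minus power_divide sum_divide_distrib)

lemma InvN_close:
  fixes \<delta> :: real
  assumes close: "\<And>j. j < K \<Longrightarrow> \<bar>\<phi> j - out_prob j\<bar> \<le> \<delta>" and small: "real K * \<delta> \<le> (p - q) / 2"
    and i: "i < K"
  shows "\<bar>InvN K p q \<phi> i - \<theta> i\<bar> \<le> 2 * (real K + 1) * (\<delta> / (p - q))"
proof -
  have "\<bar>max 0 (Inv K p q \<phi> j) - \<theta> j\<bar> \<le> \<delta> / (p - q)" if "j < K" for j
  proof -
    have "\<bar>max 0 (Inv K p q \<phi> j) - \<theta> j\<bar> \<le> \<bar>Inv K p q \<phi> j - \<theta> j\<bar>"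
      using prob_simplex_coord_bounds(1)[OF \<theta> that] by (auto simp: max_def)
    also have "\<dots> \<le> \<delta> / (p - q)"
      using close[OF that] q_less_p by (simp add: Inv_minus abs_divide divide_right_mono)
    finally show ?thesis .
  qed
  moreover have "real K * (\<delta> / (p - q)) \<le> 1 / 2"
    using small q_less_p by (simp add: field_simps)
  ultimately show ?thesis
    unfolding InvN_def
    by (intro normalized_close[OF \<theta> _ _ i, of "\<lambda>j. max 0 (Inv K p q \<phi> j)"]) auto
qed

definition supp_min :: "(nat \<Rightarrow> real) \<Rightarrow> real" where
  "supp_min \<phi> = Min (\<phi> ` {j. j < K \<and> 0 < \<theta> j})"

lemma supp_nonempty: "{j. j < K \<and> 0 < \<theta> j} \<noteq> {}"
proof
  assume "{j. j < K \<and> 0 < \<theta> j} = {}"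
  then have "\<forall>j<K. \<theta> j = 0"
    using \<theta> by (force simp: prob_simplex_def)
  then show False
    using \<theta> by (simp add: prob_simplex_def)
qed

text \<open>Near \<open>out_prob\<close>, the coordinates of \<open>\<phi>\<close> below \<open>supp_min \<phi>\<close> are exactly the zeros of
  \<open>\<theta>\<close>. As \<open>tau_star K q \<phi> \<le> supp_min \<phi>\<close>, the rescaling factor \<open>cfac\<close> is then computed from
  coordinates with \<open>\<phi> j \<approx> q\<close> only, which makes it close to \<open>1\<close>.\<close>

context
  fixes \<phi> :: "nat \<Rightarrow> real" and \<delta> :: real
  assumes \<phi>: "\<phi> \<in> prob_simplex K"
    and close: "\<And>i. i < K \<Longrightarrow> \<bar>\<phi> i - out_prob i\<bar> < \<delta>"
    and small: "real K * \<delta> \<le> p / 2"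
    and gap: "\<And>j. j < K \<Longrightarrow> 0 < \<theta> j \<Longrightarrow> (1 + 2 * real K / p) * \<delta> \<le> (p - q) * \<theta> j"
begin

lemma delta_nonneg: "0 \<le> \<delta>"
  using close[OF K_pos] by linarith

lemma supp_coord_gt:
  assumes "j < K" "0 < \<theta> j"
  shows "q + 2 * real K * \<delta> / p < \<phi> j"
proof -
  have "q + (p - q) * \<theta> j - \<delta> < \<phi> j"
    using close[OF assms(1)] by (simp add: out_prob_def abs_less_iff)
  moreover have "(1 + 2 * real K / p) * \<delta> = \<delta> + 2 * real K * \<delta> / p"
    by (simp add: distrib_right)
  ultimately show ?thesis
    using gap[OF assms] by linarith
qed

lemma below_supp_min_iff: "j < K \<Longrightarrow> \<phi> j < supp_min \<phi> \<longleftrightarrow> \<theta> j = 0"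
proof -
  assume j: "j < K"
  show ?thesis
  proof
    assume below: "\<phi> j < supp_min \<phi>"
    show "\<theta> j = 0"
    proof (rule ccontr)
      assume "\<theta> j \<noteq> 0"
      then have "j \<in> {j. j < K \<and> 0 < \<theta> j}"
        using j prob_simplex_coord_bounds(1)[OF \<theta> j] by auto
      then have "supp_min \<phi> \<le> \<phi> j"
        unfolding supp_min_def by (intro Min_le) auto
      with below show False by simp
    qed
  next
    assume "\<theta> j = 0"
    then have "\<phi> j < q + \<delta>"
      using close[OF j] by (simp add: out_prob_def abs_less_iff)
    moreover have "\<delta> \<le> 2 * real K * \<delta> / p"
    proof -
      have "\<delta> * p \<le> 1 * \<delta>"
        using delta_nonneg p_le_one by (simp add: mult_left_le)
      also have "\<dots> \<le> 2 * real K * \<delta>"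
        using delta_nonneg K_pos by (intro mult_right_mono) auto
      finally have "\<delta> * p \<le> 2 * real K * \<delta>" .
      then show ?thesis
        using q_less_p q_nonneg by (simp add: le_divide_eq)
    qed
    ultimately show "\<phi> j < supp_min \<phi>"
      unfolding supp_min_def using supp_nonempty supp_coord_gt
      by (subst Min_gr_iff) fastforce+
  qed
qed

lemma abs_cfac_below_supp_min:
  assumes "\<tau> \<le> supp_min \<phi>"
  shows "\<bar>cfac K q \<phi> \<tau> - 1\<bar> \<le> 2 * real K * \<delta> / p"
proof (rule abs_cfac_minus_one_le)
  show "(\<Sum>i<K. \<phi> i) = 1" using \<phi> by (simp add: prob_simplex_def)
  show "\<bar>\<phi> j - q\<bar> \<le> \<delta>" if "j < K" "\<phi> j < \<tau>" for j
    using that assms close[of j] below_supp_min_iff[of j] by (simp add: out_prob_def)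
  obtain j0 where j0: "j0 < K" "0 < \<theta> j0"
    using supp_nonempty by blast
  have "{j. j < K \<and> \<phi> j < \<tau>} \<subseteq> {..<K} - {j0}"
    using assms below_supp_min_iff j0 by fastforce
  then have "mcount K \<phi> \<tau> \<le> K - 1"
    unfolding mcount_def using j0 card_mono[of "{..<K} - {j0}"] by fastforce
  then show "real (mcount K \<phi> \<tau>) \<le> real K - 1"
    using K_pos by linarith
qed (use delta_nonneg q_nonneg q_less_p small p_q_sum in auto)

lemma tau_star_le_supp_min: "tau_star K q \<phi> \<le> supp_min \<phi>"
proof (rule tau_star_le)
  have "supp_min \<phi> \<in> \<phi> ` {j. j < K \<and> 0 < \<theta> j}"
    unfolding supp_min_def using supp_nonempty by (intro Min_in) auto
  then show "supp_min \<phi> \<in> \<phi> ` {..<K}"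
    by auto
next
  fix j assume j: "j < K" "supp_min \<phi> \<le> \<phi> j"
  let ?c = "cfac K q \<phi> (supp_min \<phi>)"
  have "0 < \<theta> j"
    using j below_supp_min_iff prob_simplex_coord_bounds(1)[OF \<theta>] by force
  then have "q + 2 * real K * \<delta> / p < \<phi> j"
    using supp_coord_gt j by blast
  moreover have "\<bar>(?c - 1) * \<phi> j\<bar> \<le> 2 * real K * \<delta> / p * 1"
    unfolding abs_mult using abs_cfac_below_supp_min[of "supp_min \<phi>"] prob_simplex_coord_bounds[OF \<phi> j(1)]
    by (intro mult_mono) auto
  ultimately show "q \<le> ?c * \<phi> j"
    by (simp add: abs_le_iff algebra_simps)
qed

lemma MLEstar_close:
  assumes i: "i < K"
  shows "\<bar>MLEstar K p q \<phi> i - \<theta> i\<bar> \<le> (1 + 2 * real K / p) * \<delta> / (p - q)"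
proof (cases "\<phi> i < tau_star K q \<phi>")
  case True
  then have "\<theta> i = 0"
    using tau_star_le_supp_min below_supp_min_iff[OF i] by simp
  then show ?thesis
    using True delta_nonneg q_less_p q_nonneg by (simp add: MLEstar_def)
next
  case False
  let ?c = "cfac K q \<phi> (tau_star K q \<phi>)"
  have "MLEstar K p q \<phi> i - \<theta> i = ((?c - 1) * \<phi> i + (\<phi> i - out_prob i)) / (p - q)"
    using False q_less_p by (simp add: MLEstar_def out_prob_def field_simps)
  moreover have "\<bar>(?c - 1) * \<phi> i\<bar> \<le> 2 * real K * \<delta> / p * 1"
    unfolding abs_mult using abs_cfac_below_supp_min[OF tau_star_le_supp_min] prob_simplex_coord_bounds[OF \<phi> i]
    by (intro mult_mono) auto
  then have "\<bar>(?c - 1) * \<phi> i + (\<phi> i - out_prob i)\<bar> \<le> (1 + 2 * real K / p) * \<delta>"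
    using close[OF i] by (simp add: algebra_simps)
  ultimately show ?thesis
    using q_less_p by (simp add: abs_divide divide_right_mono)
qed

end

lemma consistent_if_continuous_at_out_prob:
  fixes est :: "(nat \<Rightarrow> real) \<Rightarrow> nat \<Rightarrow> real"
  assumes cont: "\<And>\<epsilon>. 0 < \<epsilon> \<Longrightarrow>
      \<exists>\<delta>>0. \<forall>\<phi>\<in>prob_simplex K. sqdist K \<phi> out_prob < \<delta> \<longrightarrow> sqdist K (est \<phi>) \<theta> \<le> \<epsilon>"
    and \<epsilon>: "0 < \<epsilon>"
  shows "(\<lambda>N. measure_pmf.prob (phi_pmf K p q \<theta> N)
      {\<phi>. sqrt (sqdist K (est \<phi>) \<theta>) > \<epsilon>}) \<longlonglongrightarrow> 0"
proof -
  obtain \<delta> where \<delta>: "0 < \<delta>"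
    and close: "\<And>\<phi>. \<phi> \<in> prob_simplex K \<Longrightarrow> sqdist K \<phi> out_prob < \<delta> \<Longrightarrow>
      sqdist K (est \<phi>) \<theta> \<le> \<epsilon>\<^sup>2"
    using cont[of "\<epsilon>\<^sup>2"] \<epsilon> by auto
  have bound: "measure_pmf.prob (phi_pmf K p q \<theta> N) {\<phi>. sqrt (sqdist K (est \<phi>) \<theta>) > \<epsilon>}
      \<le> real K / (4 * \<delta>) * inverse (real N)" if N: "1 \<le> N" for N :: nat
  proof -
    let ?M = "phi_pmf K p q \<theta> N"
    have "{\<phi>. sqrt (sqdist K (est \<phi>) \<theta>) > \<epsilon>} \<inter> set_pmf ?M \<subseteq> {\<phi>. \<delta> \<le> sqdist K \<phi> out_prob}"
    proof safe
      fix \<phi> assume \<phi>: "\<phi> \<in> set_pmf ?M" and far: "sqrt (sqdist K (est \<phi>) \<theta>) > \<epsilon>"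
      show "\<delta> \<le> sqdist K \<phi> out_prob"
      proof (rule ccontr)
        assume "\<not> \<delta> \<le> sqdist K \<phi> out_prob"
        then have "sqdist K (est \<phi>) \<theta> \<le> \<epsilon>\<^sup>2"
          using close \<phi> set_pmf_phi_pmf[OF N] by auto
        then have "sqrt (sqdist K (est \<phi>) \<theta>) \<le> \<epsilon>"
          using \<epsilon> real_le_lsqrt by auto
        with far show False by simp
      qed
    qed
    then have "measure_pmf.prob ?M {\<phi>. sqrt (sqdist K (est \<phi>) \<theta>) > \<epsilon>}
        \<le> measure_pmf.prob ?M {\<phi>. \<delta> \<le> sqdist K \<phi> out_prob}"
      by (subst measure_Int_set_pmf[symmetric]) (rule measure_pmf.finite_measure_mono, auto)
    also have "\<dots> \<le> real K / (4 * real N * \<delta>)"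
      using N \<delta> by (rule prob_sqdist_phi_ge)
    finally show ?thesis
      by (simp add: field_simps)
  qed
  have upper: "\<forall>\<^sub>F N in sequentially. measure_pmf.prob (phi_pmf K p q \<theta> N)
      {\<phi>. sqrt (sqdist K (est \<phi>) \<theta>) > \<epsilon>} \<le> real K / (4 * \<delta>) * inverse (real N)"
    using eventually_ge_at_top[of "1::nat"] by eventually_elim (rule bound)
  have lower: "\<forall>\<^sub>F N in sequentially. 0 \<le> measure_pmf.prob (phi_pmf K p q \<theta> N)
      {\<phi>. sqrt (sqdist K (est \<phi>) \<theta>) > \<epsilon>}"
    by simp
  show ?thesis
    using tendsto_mult_right_zero[OF lim_inverse_n, of "real K / (4 * \<delta>)"]
    by (rule tendsto_sandwich[OF lower upper tendsto_const])
qed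

lemma continuous_at_out_prob_if_coordinatewise:
  fixes est :: "(nat \<Rightarrow> real) \<Rightarrow> nat \<Rightarrow> real"
  assumes coord: "\<And>\<eta>. 0 < \<eta> \<Longrightarrow> \<exists>\<delta>>0. \<forall>\<phi>\<in>prob_simplex K.
      (\<forall>i<K. \<bar>\<phi> i - out_prob i\<bar> < \<delta>) \<longrightarrow> (\<forall>i<K. \<bar>est \<phi> i - \<theta> i\<bar> \<le> \<eta>)"
    and \<epsilon>: "0 < \<epsilon>"
  shows "\<exists>\<delta>>0. \<forall>\<phi>\<in>prob_simplex K. sqdist K \<phi> out_prob < \<delta> \<longrightarrow> sqdist K (est \<phi>) \<theta> \<le> \<epsilon>"
proof -
  define \<eta> where "\<eta> = sqrt (\<epsilon> / K)"
  have "0 < \<eta>" using \<epsilon> K_pos by (simp add: \<eta>_def)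
  from coord[OF this] obtain \<delta> where \<delta>: "0 < \<delta>" and close: "\<forall>\<phi>\<in>prob_simplex K.
      (\<forall>i<K. \<bar>\<phi> i - out_prob i\<bar> < \<delta>) \<longrightarrow> (\<forall>i<K. \<bar>est \<phi> i - \<theta> i\<bar> \<le> \<eta>)"
    by blast
  show ?thesis
  proof (intro exI conjI ballI impI)
    show "0 < \<delta>\<^sup>2" using \<delta> by simp
    fix \<phi> assume \<phi>: "\<phi> \<in> prob_simplex K" and sq: "sqdist K \<phi> out_prob < \<delta>\<^sup>2"
    have "\<bar>\<phi> i - out_prob i\<bar> < \<delta>" if "i < K" for i
    proof -
      have "(\<phi> i - out_prob i)\<^sup>2 < \<delta>\<^sup>2"
        using coordinate_sq_le_sqdist[OF that, of \<phi> out_prob] sq by linarith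
      then show ?thesis
        using \<delta> power2_less_imp_less[of "\<bar>\<phi> i - out_prob i\<bar>" \<delta>] by (metis power2_abs less_imp_le)
    qed
    then have "sqdist K (est \<phi>) \<theta> \<le> real K * \<eta>\<^sup>2"
      using close \<phi> by (intro sqdist_le_of_coordinatewise) blast
    also have "\<dots> = \<epsilon>"
      using \<epsilon> K_pos by (simp add: \<eta>_def)
    finally show "sqdist K (est \<phi>) \<theta> \<le> \<epsilon>" .
  qed
qed

lemma consistent_Inv:
  assumes "0 < \<epsilon>"
  shows "(\<lambda>N. measure_pmf.prob (phi_pmf K p q \<theta> N)
      {\<phi>. sqrt (sqdist K (Inv K p q \<phi>) \<theta>) > \<epsilon>}) \<longlonglongrightarrow> 0"
proof (rule consistent_if_continuous_at_out_prob[OF _ assms])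
  fix \<epsilon>' :: real assume "0 < \<epsilon>'"
  then show "\<exists>\<delta>>0. \<forall>\<phi>\<in>prob_simplex K.
      sqdist K \<phi> out_prob < \<delta> \<longrightarrow> sqdist K (Inv K p q \<phi>) \<theta> \<le> \<epsilon>'"
    using q_less_p by (intro exI[of _ "\<epsilon>' * (p - q)\<^sup>2"]) (auto simp: sqdist_Inv field_simps)
qed

lemma consistent_InvP:
  assumes "0 < \<epsilon>"
  shows "(\<lambda>N. measure_pmf.prob (phi_pmf K p q \<theta> N)
      {\<phi>. sqrt (sqdist K (InvP K p q \<phi>) \<theta>) > \<epsilon>}) \<longlonglongrightarrow> 0"
proof (rule consistent_if_continuous_at_out_prob[OF _ assms])
  fix \<epsilon>' :: real assume \<epsilon>': "0 < \<epsilon>'"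
  show "\<exists>\<delta>>0. \<forall>\<phi>\<in>prob_simplex K.
      sqdist K \<phi> out_prob < \<delta> \<longrightarrow> sqdist K (InvP K p q \<phi>) \<theta> \<le> \<epsilon>'"
  proof (intro exI[of _ "\<epsilon>' * (p - q)\<^sup>2 / 4"] conjI ballI impI)
    show "0 < \<epsilon>' * (p - q)\<^sup>2 / 4" using \<epsilon>' q_less_p by simp
    fix \<phi> assume "sqdist K \<phi> out_prob < \<epsilon>' * (p - q)\<^sup>2 / 4"
    then have "4 * sqdist K (Inv K p q \<phi>) \<theta> \<le> \<epsilon>'"
      using q_less_p by (simp add: sqdist_Inv field_simps)
    then show "sqdist K (InvP K p q \<phi>) \<theta> \<le> \<epsilon>'"
      using sqdist_InvP_le[OF K_pos \<theta>, of p q \<phi>] by linarith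
  qed
qed

lemma consistent_InvN:
  assumes "0 < \<epsilon>"
  shows "(\<lambda>N. measure_pmf.prob (phi_pmf K p q \<theta> N)
      {\<phi>. sqrt (sqdist K (InvN K p q \<phi>) \<theta>) > \<epsilon>}) \<longlonglongrightarrow> 0"
proof (intro consistent_if_continuous_at_out_prob[OF _ assms] continuous_at_out_prob_if_coordinatewise)
  fix \<eta> :: real assume "0 < \<eta>"
  then have "\<forall>\<^sub>F \<delta> in at_right 0.
      0 < \<delta> \<and> real K * \<delta> < (p - q) / 2 \<and> (2 * (real K + 1) / (p - q)) * \<delta> < \<eta>"
    using q_less_p by (intro eventually_conj eventually_at_right_less eventually_mult_less_at_right_0) auto
  then obtain \<delta> where \<delta>: "0 < \<delta>" "real K * \<delta> < (p - q) / 2" "(2 * (real K + 1) / (p - q)) * \<delta> < \<eta>"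
    using eventually_happens' trivial_limit_at_right_real by blast
  show "\<exists>\<delta>>0. \<forall>\<phi>\<in>prob_simplex K.
      (\<forall>i<K. \<bar>\<phi> i - out_prob i\<bar> < \<delta>) \<longrightarrow> (\<forall>i<K. \<bar>InvN K p q \<phi> i - \<theta> i\<bar> \<le> \<eta>)"
  proof (intro exI[of _ \<delta>] conjI ballI impI allI)
    fix \<phi> i assume "\<forall>i<K. \<bar>\<phi> i - out_prob i\<bar> < \<delta>" "i < K"
    then have "\<bar>InvN K p q \<phi> i - \<theta> i\<bar> \<le> 2 * (real K + 1) * (\<delta> / (p - q))"
      using \<delta>(2) by (intro InvN_close) auto
    then show "\<bar>InvN K p q \<phi> i - \<theta> i\<bar> \<le> \<eta>"
      using \<delta>(3) by simp
  qed (use \<delta> in auto)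
qed

lemma consistent_MLEstar:
  assumes "0 < \<epsilon>"
  shows "(\<lambda>N. measure_pmf.prob (phi_pmf K p q \<theta> N)
      {\<phi>. sqrt (sqdist K (MLEstar K p q \<phi>) \<theta>) > \<epsilon>}) \<longlonglongrightarrow> 0"
proof (intro consistent_if_continuous_at_out_prob[OF _ assms] continuous_at_out_prob_if_coordinatewise)
  fix \<eta> :: real assume "0 < \<eta>"
  define gap where "gap = (p - q) * Min (\<theta> ` {j. j < K \<and> 0 < \<theta> j})"
  have gap: "0 < gap" "\<And>j. j < K \<Longrightarrow> 0 < \<theta> j \<Longrightarrow> gap \<le> (p - q) * \<theta> j"
    using supp_nonempty q_less_p by (auto simp: gap_def)
  define c where "c = 1 + 2 * real K / p"
  have "\<forall>\<^sub>F \<delta> in at_right 0.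
      0 < \<delta> \<and> real K * \<delta> < p / 2 \<and> c * \<delta> < gap \<and> (c / (p - q)) * \<delta> < \<eta>"
    using q_less_p q_nonneg \<open>0 < \<eta>\<close> gap(1)
    by (intro eventually_conj eventually_at_right_less eventually_mult_less_at_right_0) auto
  then obtain \<delta> where \<delta>: "0 < \<delta>" "real K * \<delta> < p / 2" "c * \<delta> < gap" "(c / (p - q)) * \<delta> < \<eta>"
    using eventually_happens' trivial_limit_at_right_real by blast
  show "\<exists>\<delta>>0. \<forall>\<phi>\<in>prob_simplex K.
      (\<forall>i<K. \<bar>\<phi> i - out_prob i\<bar> < \<delta>) \<longrightarrow> (\<forall>i<K. \<bar>MLEstar K p q \<phi> i - \<theta> i\<bar> \<le> \<eta>)"
  proof (intro exI[of _ \<delta>] conjI ballI impI allI)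
    fix \<phi> i assume "\<phi> \<in> prob_simplex K" "\<forall>i<K. \<bar>\<phi> i - out_prob i\<bar> < \<delta>" "i < K"
    moreover have "c * \<delta> \<le> (p - q) * \<theta> j" if "j < K" "0 < \<theta> j" for j
      using \<delta>(3) gap(2)[OF that] by linarith
    ultimately have "\<bar>MLEstar K p q \<phi> i - \<theta> i\<bar> \<le> c * \<delta> / (p - q)"
      unfolding c_def using \<delta>(2) by (intro MLEstar_close) auto
    then show "\<bar>MLEstar K p q \<phi> i - \<theta> i\<bar> \<le> \<eta>"
      using \<delta>(4) by simp
  qed (use \<delta> in auto)
qed

lemma mse_Inv:
  assumes "1 \<le> N"
  shows "measure_pmf.expectation (phi_pmf K p q \<theta> N) (\<lambda>\<phi>. sqdist K (Inv K p q \<phi>) \<theta>)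
    \<le> 1 / (4 * (p - q)\<^sup>2) * real K / real N"
proof -
  have "measure_pmf.expectation (phi_pmf K p q \<theta> N) (\<lambda>\<phi>. sqdist K (Inv K p q \<phi>) \<theta>)
      = measure_pmf.expectation (phi_pmf K p q \<theta> N) (\<lambda>\<phi>. sqdist K \<phi> out_prob) / (p - q)\<^sup>2"
    by (simp add: sqdist_Inv)
  also have "\<dots> \<le> real K / (4 * real N) / (p - q)\<^sup>2"
    using expectation_sqdist_phi[OF assms] by (intro divide_right_mono) auto
  finally show ?thesis by (simp add: mult_ac)
qed

lemma mse_InvP:
  assumes "1 \<le> N"
  shows "measure_pmf.expectation (phi_pmf K p q \<theta> N) (\<lambda>\<phi>. sqdist K (InvP K p q \<phi>) \<theta>)
    \<le> 1 / (p - q)\<^sup>2 * real K / real N"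
proof -
  have "measure_pmf.expectation (phi_pmf K p q \<theta> N) (\<lambda>\<phi>. sqdist K (InvP K p q \<phi>) \<theta>)
      \<le> measure_pmf.expectation (phi_pmf K p q \<theta> N) (\<lambda>\<phi>. 4 * sqdist K (Inv K p q \<phi>) \<theta>)"
    by (intro integral_mono integrable_phi_pmf sqdist_InvP_le K_pos \<theta>)
  also have "\<dots> \<le> 4 * (1 / (4 * (p - q)\<^sup>2) * real K / real N)"
    using mse_Inv[OF assms] by simp
  finally show ?thesis by simp
qed

end

theorem theorem9:
  fixes K :: nat and p q :: real
  assumes "K \<ge> 2" and "0 < q" and "q < p" and "p + (real K - 1) * q = 1"
  shows "(\<forall>est \<in> {Inv, InvP, InvN, MLEstar}. \<forall>\<theta> \<in> prob_simplex K. \<forall>\<epsilon>>0.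
            (\<lambda>N. measure_pmf.prob (phi_pmf K p q \<theta> N)
                    {\<phi>. sqrt (sqdist K (est K p q \<phi>) \<theta>) > \<epsilon>}) \<longlonglongrightarrow> 0)
       \<and> (\<forall>est \<in> {Inv, InvP}. \<exists>C. \<forall>\<theta> \<in> prob_simplex K. \<forall>N\<ge>1.
            measure_pmf.expectation (phi_pmf K p q \<theta> N) (\<lambda>\<phi>. sqdist K (est K p q \<phi>) \<theta>)
              \<le> C * real K / real N)"
proof -
  have rr: "randomized_response K p q \<theta>" if "\<theta> \<in> prob_simplex K" for \<theta>
    using assms that by unfold_locales auto
  have "\<exists>C. \<forall>\<theta> \<in> prob_simplex K. \<forall>N\<ge>1.
      measure_pmf.expectation (phi_pmf K p q \<theta> N) (\<lambda>\<phi>. sqdist K (Inv K p q \<phi>) \<theta>) \<le> C * real K / real N"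
    using randomized_response.mse_Inv[OF rr] by blast
  moreover have "\<exists>C. \<forall>\<theta> \<in> prob_simplex K. \<forall>N\<ge>1.
      measure_pmf.expectation (phi_pmf K p q \<theta> N) (\<lambda>\<phi>. sqdist K (InvP K p q \<phi>) \<theta>) \<le> C * real K / real N"
    using randomized_response.mse_InvP[OF rr] by blast
  ultimately show ?thesis
    using randomized_response.consistent_Inv[OF rr] randomized_response.consistent_InvP[OF rr]
      randomized_response.consistent_InvN[OF rr] randomized_response.consistent_MLEstar[OF rr]
    by auto
qed

end
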